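(* Let $X$ be a $T_1$ topological space with at least two points and let $f\neq g$ be vertices of $\Gamma(C_c(X)_F)$. Then (i) $d(f,g)=1$ iff $Z(f)\cup Z(g)=X$; (ii) $d(f,g)=2$ iff $Z(f)\cup Z(g)\neq X$ and $Z(f)\cap Z(g)\neq\emptyset$; (iii) $d(f,g)=3$ iff $Z(f)\cup Z(g)\neq X$ and $Z(f)\cap Z(g)=\emptyset$.
   Context: $C_c(X)_F$ denotes the set of all functions $f:X\to\mathbb{R}$ whose range is countable and whose set of points of discontinuity is finite; it is a commutative ring under pointwise operations. $Z(f)=\{x:f(x)=0\}$. $\Gamma(C_c(X)_F)$ is the zero-divisor graph: its vertices are the nonzero zero divisors of $C_c(X)_F$ (equivalently the nonzero $f$ with $Z(f)\neq\emptyset$), and distinct vertices $f,g$ are adjacent iff $fg=0$. $d(f,g)$ is the length of a shortest path between $f$ and $g$. *)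

theory Defs
  imports "HOL-Analysis.Analysis" "HOL-Library.Extended_Nat"
begin

definition cont_at :: "'a topology \<Rightarrow> ('a \<Rightarrow> real) \<Rightarrow> 'a \<Rightarrow> bool" where
  "cont_at X f x \<longleftrightarrow> (\<forall>V. open V \<and> f x \<in> V \<longrightarrow>
      (\<exists>U. openin X U \<and> x \<in> U \<and> f ` U \<subseteq> V))"

definition discont_points :: "'a topology \<Rightarrow> ('a \<Rightarrow> real) \<Rightarrow> 'a set" where
  "discont_points X f = {x \<in> topspace X. \<not> cont_at X f x}"

definition CcF :: "'a topology \<Rightarrow> ('a \<Rightarrow> real) set" where
  "CcF X = {f. (\<forall>x. x \<notin> topspace X \<longrightarrow> f x = 0)
              \<and> countable (f ` topspace X)
              \<and> finite (discont_points X f)}"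

definition zset :: "'a topology \<Rightarrow> ('a \<Rightarrow> real) \<Rightarrow> 'a set" where
  "zset X f = {x \<in> topspace X. f x = 0}"

definition zd_vertex :: "'a topology \<Rightarrow> ('a \<Rightarrow> real) \<Rightarrow> bool" where
  "zd_vertex X f \<longleftrightarrow> f \<in> CcF X \<and> f \<noteq> (\<lambda>_. 0) \<and>
     (\<exists>g \<in> CcF X. g \<noteq> (\<lambda>_. 0) \<and> (\<lambda>x. f x * g x) = (\<lambda>_. 0))"

definition zd_adj :: "'a topology \<Rightarrow> ('a \<Rightarrow> real) \<Rightarrow> ('a \<Rightarrow> real) \<Rightarrow> bool" where
  "zd_adj X f g \<longleftrightarrow> zd_vertex X f \<and> zd_vertex X g \<and> f \<noteq> g \<and>
     (\<lambda>x. f x * g x) = (\<lambda>_. 0)"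

text \<open>A path of length n from f to g: a list of n+1 vertices, consecutive ones adjacent.\<close>
definition zd_path :: "'a topology \<Rightarrow> ('a \<Rightarrow> real) list \<Rightarrow> bool" where
  "zd_path X ps \<longleftrightarrow> ps \<noteq> [] \<and> (\<forall>p \<in> set ps. zd_vertex X p) \<and>
     (\<forall>i. Suc i < length ps \<longrightarrow> zd_adj X (ps ! i) (ps ! Suc i))"

text \<open>Graph distance (\<infinity> if no path).\<close>
definition zd_dist :: "'a topology \<Rightarrow> ('a \<Rightarrow> real) \<Rightarrow> ('a \<Rightarrow> real) \<Rightarrow> enat" where
  "zd_dist X f g = Inf {enat (length ps - 1) | ps. zd_path X ps \<and> hd ps = f \<and> last ps = g}"

end

theory Submission
  imports Defs
begin

text \<open>In a T1 space the indicator 1_x of a point x lies in C_c(X)_F, so a function of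
  C_c(X)_F is a vertex iff it is non-zero and has a zero, and 1_x is adjacent to every vertex
  vanishing at x. Two vertices are adjacent iff Z(f) \<union> Z(g) = X, which gives (i). A common
  neighbour h of f and g forces f and g to vanish where h does not, so a path of length 2 needs
  Z(f) \<inter> Z(g) \<noteq> {}; conversely f, 1_x, g is such a path for x \<in> Z(f) \<inter> Z(g). Otherwise
  f, 1_a, 1_b, g with a \<in> Z(f), b \<in> Z(g) is a path of length 3.\<close>

lemma cont_at_if_locally_constant:
  assumes "openin X U" "y \<in> U" "\<And>z. z \<in> U \<Longrightarrow> h z = h y"
  shows "cont_at X h y"
  unfolding cont_at_def using assms by (metis image_subset_iff)

lemma CcF_if_constant_off_finite:
  assumes "t1_space X" "finite F"
    and "\<And>x. x \<notin> topspace X \<Longrightarrow> h x = 0"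
    and "finite (h ` topspace X)"
    and "\<And>y. y \<in> topspace X - F \<Longrightarrow> h y = c"
  shows "h \<in> CcF X"
proof -
  have "closedin X (F \<inter> topspace X)"
    using assms(1,2) t1_space_closedin_finite by blast
  then have "openin X (topspace X - F)"
    by (metis Diff_Int2 inf.idem closedin_def)
  then have "cont_at X h y" if "y \<in> topspace X - F" for y
    using that assms(5) by (intro cont_at_if_locally_constant[of X "topspace X - F"]) auto
  then have "discont_points X h \<subseteq> F"
    by (auto simp: discont_points_def)
  then show ?thesis
    unfolding CcF_def using assms(2-4) finite_subset countable_finite by blast
qed

lemma indicator_point_CcF:
  assumes "t1_space X" "x \<in> topspace X"
  shows "(indicator {x} :: 'a \<Rightarrow> real) \<in> CcF X"
proof (rule CcF_if_constant_off_finite[OF assms(1), of "{x}" _ 0])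
  show "finite ((indicator {x} :: 'a \<Rightarrow> real) ` topspace X)"
    by (rule finite_subset[of _ "{0, 1}"]) (auto simp: indicator_def)
qed (use assms(2) in \<open>auto simp: indicator_def\<close>)

lemma indicator_point_neq_0: "(indicator {x} :: 'a \<Rightarrow> real) \<noteq> (\<lambda>_. 0)"
  by (metis indicator_simps(1) insertI1 zero_neq_one)

lemma zset_indicator_point: "zset X (indicator {x}) = topspace X - {x}"
  by (auto simp: zset_def)

lemma CcF_zero_outside: "f \<in> CcF X \<Longrightarrow> x \<notin> topspace X \<Longrightarrow> f x = 0"
  by (simp add: CcF_def)

lemma CcF_mult_eq_0_iff:
  assumes "f \<in> CcF X"
  shows "(\<lambda>x. f x * g x) = (\<lambda>_. 0) \<longleftrightarrow> zset X f \<union> zset X g = topspace X"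
  using CcF_zero_outside[OF assms] by (auto simp: zset_def fun_eq_iff)

lemma zd_vertex_iff:
  assumes "t1_space X"
  shows "zd_vertex X f \<longleftrightarrow> f \<in> CcF X \<and> f \<noteq> (\<lambda>_. 0) \<and> zset X f \<noteq> {}"
proof
  assume f: "zd_vertex X f"
  then obtain h where h: "h \<in> CcF X" "h \<noteq> (\<lambda>_. 0)" "(\<lambda>x. f x * h x) = (\<lambda>_. 0)"
    unfolding zd_vertex_def by blast
  then have "zset X f \<union> zset X h = topspace X"
    using f CcF_mult_eq_0_iff unfolding zd_vertex_def by blast
  moreover have "zset X h \<noteq> topspace X"
    using h(1,2) CcF_zero_outside by (fastforce simp: zset_def)
  ultimately show "f \<in> CcF X \<and> f \<noteq> (\<lambda>_. 0) \<and> zset X f \<noteq> {}"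
    using f unfolding zd_vertex_def by auto
next
  assume f: "f \<in> CcF X \<and> f \<noteq> (\<lambda>_. 0) \<and> zset X f \<noteq> {}"
  then obtain z where z: "z \<in> zset X f" by blast
  then have "z \<in> topspace X" by (simp add: zset_def)
  moreover have "zset X f \<union> zset X (indicator {z}) = topspace X"
    using z by (auto simp: zset_def indicator_def)
  ultimately show "zd_vertex X f"
    unfolding zd_vertex_def
    using f indicator_point_CcF[OF assms] indicator_point_neq_0[of z] CcF_mult_eq_0_iff by blast
qed

lemma zd_vertex_indicator_point:
  assumes "t1_space X" "x \<in> topspace X" "y \<in> topspace X" "y \<noteq> x"
  shows "zd_vertex X (indicator {x})"
  unfolding zd_vertex_iff[OF assms(1)] zset_indicator_point
  using assms indicator_point_CcF[OF assms(1,2)] indicator_point_neq_0[of x] by blast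

lemma zd_adj_iff_zset:
  assumes "zd_vertex X f" "zd_vertex X g" "f \<noteq> g"
  shows "zd_adj X f g \<longleftrightarrow> zset X f \<union> zset X g = topspace X"
  using assms CcF_mult_eq_0_iff unfolding zd_adj_def zd_vertex_def by blast

lemma zd_adj_sym: "zd_adj X f g \<Longrightarrow> zd_adj X g f"
  unfolding zd_adj_def by (auto simp: mult.commute)

lemma zd_adj_indicator_point:
  assumes "zd_vertex X f" "zd_vertex X (indicator {x})" "x \<in> zset X f"
  shows "zd_adj X f (indicator {x})"
proof -
  have "f \<noteq> indicator {x}"
  proof
    assume "f = indicator {x}"
    then have "f x = 1" by simp
    then show False using assms(3) by (simp add: zset_def)
  qed
  moreover have "zset X f \<union> zset X (indicator {x}) = topspace X"
    using assms(3) by (auto simp: zset_def indicator_def)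
  ultimately show ?thesis using assms zd_adj_iff_zset by blast
qed

lemma zd_adj_common_neighbour:
  assumes "zd_adj X f h" "zd_adj X h g"
  shows "zset X f \<inter> zset X g \<noteq> {}"
proof -
  have h: "h \<in> CcF X" "h \<noteq> (\<lambda>_. 0)"
    using assms(1) unfolding zd_adj_def zd_vertex_def by blast+
  then obtain y where "h y \<noteq> 0" by auto
  moreover from this h(1) have "y \<in> topspace X" by (auto simp: CcF_def)
  moreover have "f y * h y = 0" "h y * g y = 0"
    using assms unfolding zd_adj_def by (auto dest: fun_cong[of _ _ y])
  ultimately show ?thesis by (auto simp: zset_def)
qed

lemma zd_path_singleton [simp]: "zd_path X [f] \<longleftrightarrow> zd_vertex X f"
  by (simp add: zd_path_def)

lemma zd_path_Cons_Cons [simp]: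
  "zd_path X (f # h # ps) \<longleftrightarrow> zd_adj X f h \<and> zd_path X (h # ps)"
proof -
  have "(\<forall>i. Suc i < length (f # h # ps) \<longrightarrow> zd_adj X ((f # h # ps) ! i) ((f # h # ps) ! Suc i))
    \<longleftrightarrow> zd_adj X f h \<and> (\<forall>i. Suc i < length (h # ps) \<longrightarrow> zd_adj X ((h # ps) ! i) ((h # ps) ! Suc i))"
    using All_less_Suc2[of "length ps"] by simp
  then show ?thesis
    unfolding zd_path_def by (auto simp: zd_adj_def)
qed

lemma zd_dist_le:
  assumes "zd_path X ps" "hd ps = f" "last ps = g"
  shows "zd_dist X f g \<le> of_nat (length ps - 1)"
  unfolding zd_dist_def of_nat_eq_enat using assms by (blast intro: Inf_lower)

lemma zd_dist_ge:
  assumes "\<And>ps. zd_path X ps \<Longrightarrow> hd ps = f \<Longrightarrow> last ps = g \<Longrightarrow> n < length ps"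
  shows "of_nat n \<le> zd_dist X f g"
  unfolding zd_dist_def of_nat_eq_enat using assms by (force intro: Inf_greatest)

lemma zd_path_length_ge_2:
  assumes "zd_path X ps" "hd ps \<noteq> last ps"
  shows "2 \<le> length ps"
  using assms by (cases ps) (auto simp: zd_path_def Suc_le_eq split: if_split_asm)

lemma zd_path_length_2:
  assumes "zd_path X ps" "length ps = 2"
  shows "zd_adj X (hd ps) (last ps)"
  using assms by (auto simp: numeral_2_eq_2 length_Suc_conv)

lemma zd_path_length_gt_2:
  assumes "zd_path X ps" "hd ps \<noteq> last ps"
    and "zset X (hd ps) \<union> zset X (last ps) \<noteq> topspace X"
  shows "2 < length ps"
proof -
  have "length ps \<noteq> 2"
    using assms zd_path_length_2 zd_adj_iff_zset unfolding zd_adj_def by blast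
  then show ?thesis
    using assms(1,2) zd_path_length_ge_2 by fastforce
qed

lemma zd_path_length_3:
  assumes "zd_path X ps" "length ps = 3"
  shows "zset X (hd ps) \<inter> zset X (last ps) \<noteq> {}"
  using assms zd_adj_common_neighbour by (fastforce simp: numeral_3_eq_3 length_Suc_conv)

lemma zd_dist_eq_1:
  assumes "zd_vertex X f" "zd_vertex X g" "f \<noteq> g"
    and "zset X f \<union> zset X g = topspace X"
  shows "zd_dist X f g = 1"
proof (rule antisym)
  have "zd_path X [f, g]"
    using assms by (simp add: zd_adj_iff_zset)
  then show "zd_dist X f g \<le> 1"
    using zd_dist_le[of X "[f, g]"] by simp
  show "1 \<le> zd_dist X f g"
    using zd_dist_ge[of X f g 1] zd_path_length_ge_2 assms(3) by force
qed

lemma zd_dist_eq_2: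
  assumes "t1_space X" "zd_vertex X f" "zd_vertex X g" "f \<noteq> g"
    and "zset X f \<union> zset X g \<noteq> topspace X" "zset X f \<inter> zset X g \<noteq> {}"
  shows "zd_dist X f g = 2"
proof (rule antisym)
  obtain x where x: "x \<in> zset X f" "x \<in> zset X g"
    using assms(6) by blast
  obtain y where "y \<in> topspace X" "y \<notin> zset X f"
    using assms(5) by (auto simp: zset_def)
  then have x_vertex: "zd_vertex X (indicator {x})"
    using x assms(1) by (intro zd_vertex_indicator_point) (auto simp: zset_def)
  have "zd_adj X f (indicator {x})" "zd_adj X (indicator {x}) g"
    using zd_adj_indicator_point[OF _ x_vertex] x assms(2,3) zd_adj_sym by blast+
  then have "zd_path X [f, indicator {x}, g]"
    by (simp add: assms(3))
  then show "zd_dist X f g \<le> 2"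
    using zd_dist_le[of X "[f, indicator {x}, g]"] by simp
  have "of_nat 2 \<le> zd_dist X f g"
  proof (rule zd_dist_ge)
    fix ps assume "zd_path X ps" "hd ps = f" "last ps = g"
    then show "2 < length ps"
      using assms(4,5) zd_path_length_gt_2 by blast
  qed
  then show "2 \<le> zd_dist X f g"
    by simp
qed

lemma zd_dist_eq_3:
  assumes "t1_space X" "zd_vertex X f" "zd_vertex X g" "f \<noteq> g"
    and "zset X f \<union> zset X g \<noteq> topspace X" "zset X f \<inter> zset X g = {}"
  shows "zd_dist X f g = 3"
proof (rule antisym)
  obtain a b where ab: "a \<in> zset X f" "b \<in> zset X g"
    using assms(1-3) zd_vertex_iff by blast
  have "a \<noteq> b" "a \<in> topspace X" "b \<in> topspace X"
    using ab assms(6) by (auto simp: zset_def)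
  then have a_vertex: "zd_vertex X (indicator {a})" and b_vertex: "zd_vertex X (indicator {b})"
    using zd_vertex_indicator_point[OF assms(1)] by metis+
  have "zd_adj X f (indicator {a})"
    using assms(2) a_vertex ab(1) by (rule zd_adj_indicator_point)
  moreover have "zd_adj X (indicator {b}) g"
    using zd_adj_indicator_point[OF assms(3) b_vertex ab(2)] by (rule zd_adj_sym)
  moreover have "a \<in> zset X (indicator {b})"
    using \<open>a \<noteq> b\<close> \<open>a \<in> topspace X\<close> by (simp add: zset_indicator_point)
  then have "zd_adj X (indicator {a}) (indicator {b})"
    using zd_adj_indicator_point[OF b_vertex a_vertex] by (blast intro: zd_adj_sym)
  ultimately have "zd_path X [f, indicator {a}, indicator {b}, g]"
    by (simp add: assms(3))
  then show "zd_dist X f g \<le> 3"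
    using zd_dist_le[of X "[f, indicator {a}, indicator {b}, g]"] by simp
  have "of_nat 3 \<le> zd_dist X f g"
  proof (rule zd_dist_ge)
    fix ps assume "zd_path X ps" "hd ps = f" "last ps = g"
    then have "2 < length ps" "length ps \<noteq> 3"
      using assms(4-6) zd_path_length_gt_2 zd_path_length_3 by blast+
    then show "3 < length ps" by simp
  qed
  then show "3 \<le> zd_dist X f g"
    by simp
qed

theorem theorem8p5:
  fixes X :: "'a topology" and f g :: "'a \<Rightarrow> real"
  assumes "t1_space X"
    and "\<exists>a b. a \<in> topspace X \<and> b \<in> topspace X \<and> a \<noteq> b"
    and "zd_vertex X f" and "zd_vertex X g" and "f \<noteq> g"
  shows "(zd_dist X f g = 1 \<longleftrightarrow> zset X f \<union> zset X g = topspace X)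
       \<and> (zd_dist X f g = 2 \<longleftrightarrow> zset X f \<union> zset X g \<noteq> topspace X \<and> zset X f \<inter> zset X g \<noteq> {})
       \<and> (zd_dist X f g = 3 \<longleftrightarrow> zset X f \<union> zset X g \<noteq> topspace X \<and> zset X f \<inter> zset X g = {})"
proof -
  define U where "U \<longleftrightarrow> zset X f \<union> zset X g = topspace X"
  define E where "E \<longleftrightarrow> zset X f \<inter> zset X g = {}"
  have "U \<Longrightarrow> zd_dist X f g = 1"
    unfolding U_def by (rule zd_dist_eq_1[OF assms(3-5)])
  moreover have "\<not> U \<Longrightarrow> \<not> E \<Longrightarrow> zd_dist X f g = 2"
    unfolding U_def E_def by (rule zd_dist_eq_2[OF assms(1,3-5)])
  moreover have "\<not> U \<Longrightarrow> E \<Longrightarrow> zd_dist X f g = 3"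
    unfolding U_def E_def by (rule zd_dist_eq_3[OF assms(1,3-5)])
  moreover have "(1::enat) \<noteq> 2" "(1::enat) \<noteq> 3" "(2::enat) \<noteq> 3"
    by simp_all
  ultimately show ?thesis
    unfolding U_def[symmetric] E_def[symmetric] by (cases U; cases E) simp_all
qed

end
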